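(* Let $N=[n]$ and $v:2^N\to\mathbb{R}_+$ be a monotone valuation with $v(\emptyset)=0$. The decision map that, for each $p\in\mathbb{R}^n_+$, chooses the lexicographically first set in $D(v;p)$ is up-consistent; and the decision map that chooses the lexicographically first set among the maximal (with respect to inclusion) sets of $D(v;p)$ is maximal and up-consistent.
   Context: For $p\in\mathbb{R}^n_+$, $p(S)=\sum_{j\in S}p_j$ and $D(v;p)=\arg\max_{S\subseteq N}(v(S)-p(S))$. A decision map is $X:\mathbb{R}^n_+\to2^N$ with $X(p)\in D(v;p)$ for all $p$; it is maximal if for every $p$ there is no $S'\in D(v;p)$ with $X(p)\subsetneq S'$. "Lexicographically first" refers to a fixed lexicographic total order on subsets of $N$. A decision map $X$ is up-consistent if for every price vector $p$ with $X(p)=S$, every $i$ and every $p_i'>p_i$, either $X(p_i',p_{-i})=S$ or $i\notin X(p_i',p_{-i})$. *)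

theory Defs
  imports Complex_Main
begin

text \<open>Ground set N = {0,...,n-1} (i.e. [n] re-indexed from 0). Price vectors are
  functions nat => real; only their values on N matter; p is in R^n_+ iff
  p j >= 0 for all j < n.\<close>

definition price_vec :: "nat \<Rightarrow> (nat \<Rightarrow> real) \<Rightarrow> bool" where
  "price_vec n p \<longleftrightarrow> (\<forall>j<n. 0 \<le> p j)"

definition demand :: "(nat set \<Rightarrow> real) \<Rightarrow> nat \<Rightarrow> (nat \<Rightarrow> real) \<Rightarrow> nat set set" where
  "demand v n p = {S. S \<subseteq> {..<n} \<and>
      (\<forall>T. T \<subseteq> {..<n} \<longrightarrow> v T - sum p T \<le> v S - sum p S)}"

definition decision_map :: "(nat set \<Rightarrow> real) \<Rightarrow> nat \<Rightarrow> ((nat \<Rightarrow> real) \<Rightarrow> nat set) \<Rightarrow> bool" where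
  "decision_map v n X \<longleftrightarrow> (\<forall>p. price_vec n p \<longrightarrow> X p \<in> demand v n p)"

definition maximal_dm :: "(nat set \<Rightarrow> real) \<Rightarrow> nat \<Rightarrow> ((nat \<Rightarrow> real) \<Rightarrow> nat set) \<Rightarrow> bool" where
  "maximal_dm v n X \<longleftrightarrow>
     (\<forall>p. price_vec n p \<longrightarrow> \<not> (\<exists>S' \<in> demand v n p. X p \<subset> S'))"

definition up_consistent :: "nat \<Rightarrow> ((nat \<Rightarrow> real) \<Rightarrow> nat set) \<Rightarrow> bool" where
  "up_consistent n X \<longleftrightarrow>
     (\<forall>p. price_vec n p \<longrightarrow> (\<forall>i<n. \<forall>q. p i < q \<longrightarrow>
        X (p(i := q)) = X p \<or> i \<notin> X (p(i := q))))"

text \<open>Fixed lexicographic order on (finite) subsets: compare characteristic vectors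
  lexicographically, coordinate 0 first, with 1 preceding 0; i.e. A precedes B iff
  the least element of the symmetric difference lies in A.\<close>
definition lex_le :: "nat set \<Rightarrow> nat set \<Rightarrow> bool" where
  "lex_le A B \<longleftrightarrow> A = B \<or> Min ((A - B) \<union> (B - A)) \<in> A"

definition lex_first :: "nat set set \<Rightarrow> nat set" where
  "lex_first F = (THE A. A \<in> F \<and> (\<forall>B\<in>F. lex_le A B))"

definition maximal_sets :: "nat set set \<Rightarrow> nat set set" where
  "maximal_sets F = {S \<in> F. \<not> (\<exists>S'\<in>F. S \<subset> S')}"

end

theory Submission
  imports Defs
begin

text \<open>Raising the price of item i by d > 0 lowers the utility of every bundle containing i
  by exactly d and leaves the others unchanged. So if some bundle containing i is still
  demanded at the higher price, then at the old price every demanded bundle contains i, and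
  D(v;p) is exactly the part of D(v;p') consisting of bundles that contain i. Choosing the
  lexicographically first element (of F, or of the maximal sets of F) is stable under
  passing to a subfamily that still contains the choice, which gives up-consistency.\<close>

lemma lex_le_refl: "lex_le A A"
  unfolding lex_le_def by simp

lemma lex_le_total:
  assumes "finite A" "finite B"
  shows "lex_le A B \<or> lex_le B A"
  using assms Min_in[of "(A - B) \<union> (B - A)"] unfolding lex_le_def by (auto simp: Un_commute)

lemma lex_le_antisym:
  assumes "finite A" "finite B" "lex_le A B" "lex_le B A"
  shows "A = B"
  using assms Min_in[of "(A - B) \<union> (B - A)"] unfolding lex_le_def by (auto simp: Un_commute)

lemma lex_le_iff:
  assumes "finite A" "finite B"
  shows "lex_le A B \<longleftrightarrow> A = B \<or> (\<exists>k\<in>A. k \<notin> B \<and> (\<forall>j<k. j \<in> A \<longleftrightarrow> j \<in> B))"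
proof (cases "A = B")
  case False
  let ?D = "(A - B) \<union> (B - A)"
  have fin: "finite ?D" using assms by simp
  have "Min ?D \<in> ?D" using Min_in[OF fin] False by blast
  moreover have "\<forall>j<Min ?D. j \<in> A \<longleftrightarrow> j \<in> B"
    using Min_le[OF fin] by force
  moreover have "Min ?D = k" if "k \<in> A" "k \<notin> B" "\<forall>j<k. j \<in> A \<longleftrightarrow> j \<in> B" for k
    using that by (intro Min_eqI[OF fin]) (auto simp: not_less[symmetric])
  ultimately show ?thesis
    unfolding lex_le_def using False by blast
qed (simp add: lex_le_refl)

lemma lex_le_trans:
  assumes "finite A" "finite B" "finite C" "lex_le A B" "lex_le B C"
  shows "lex_le A C"
proof (cases "A = B \<or> B = C")
  case False
  obtain k where k: "k \<in> A" "k \<notin> B" "\<forall>j<k. j \<in> A \<longleftrightarrow> j \<in> B"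
    using assms(4) False lex_le_iff[OF assms(1,2)] by blast
  obtain l where l: "l \<in> B" "l \<notin> C" "\<forall>j<l. j \<in> B \<longleftrightarrow> j \<in> C"
    using assms(5) False lex_le_iff[OF assms(2,3)] by blast
  have "\<exists>m\<in>A. m \<notin> C \<and> (\<forall>j<m. j \<in> A \<longleftrightarrow> j \<in> C)"
  proof (cases k l rule: linorder_cases)
    case less
    then show ?thesis using k l by (intro bexI[of _ k]) auto
  next
    case equal
    then show ?thesis using k l by simp
  next
    case greater
    then show ?thesis using k l by (intro bexI[of _ l]) auto
  qed
  then show ?thesis using lex_le_iff[OF assms(1,3)] by blast
next
  case True
  then show ?thesis using assms(4,5) by blast
qed

lemma ex_lex_least:
  assumes "finite F" "F \<noteq> {}" "\<forall>A\<in>F. finite A"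
  shows "\<exists>A\<in>F. \<forall>B\<in>F. lex_le A B"
  using assms
proof (induction F rule: finite_ne_induct)
  case (singleton A)
  then show ?case by (simp add: lex_le_refl)
next
  case (insert A F)
  then obtain M where M: "M \<in> F" "\<forall>B\<in>F. lex_le M B" by auto
  have fin: "finite A" "finite M" using insert.prems M by auto
  show ?case
  proof (cases "lex_le A M")
    case True
    have "lex_le A B" if "B \<in> F" for B
      using lex_le_trans[OF fin _ True] M(2) insert.prems that by simp
    then have "\<forall>B\<in>F. lex_le A B" by blast
    then show ?thesis by (auto simp: lex_le_refl)
  next
    case False
    then show ?thesis using M lex_le_total[OF fin] by (intro bexI[of _ M]) auto
  qed
qed

lemma lex_first_eqI:
  assumes "\<forall>B\<in>F. finite B" "A \<in> F" "\<forall>B\<in>F. lex_le A B"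
  shows "lex_first F = A"
  unfolding lex_first_def
proof (rule the_equality)
  fix A' assume "A' \<in> F \<and> (\<forall>B\<in>F. lex_le A' B)"
  with assms show "A' = A" by (meson lex_le_antisym)
qed (use assms in blast)

lemma lex_first_least:
  assumes "finite F" "F \<noteq> {}" "\<forall>A\<in>F. finite A"
  shows "lex_first F \<in> F" and "\<forall>B\<in>F. lex_le (lex_first F) B"
  using ex_lex_least[OF assms] lex_first_eqI[OF assms(3)] by auto

lemma lex_first_subfamily:
  assumes "finite F" "F \<noteq> {}" "\<forall>A\<in>F. finite A" "G \<subseteq> F" "lex_first F \<in> G"
  shows "lex_first G = lex_first F"
proof (rule lex_first_eqI)
  show "\<forall>B\<in>G. lex_le (lex_first F) B"
    using lex_first_least(2)[OF assms(1-3)] \<open>G \<subseteq> F\<close> by blast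
qed (use assms in blast)+

lemma maximal_sets_subset: "maximal_sets F \<subseteq> F"
  unfolding maximal_sets_def by auto

lemma maximal_sets_nonempty:
  assumes "finite F" "F \<noteq> {}"
  shows "maximal_sets F \<noteq> {}"
proof -
  obtain M where "M \<in> F" "\<forall>B\<in>F. M \<subseteq> B \<longrightarrow> M = B"
    using finite_has_maximal[OF assms] by blast
  then have "M \<in> maximal_sets F"
    unfolding maximal_sets_def by blast
  then show ?thesis by blast
qed

lemma maximal_sets_filter_upward_closed:
  assumes "\<And>S T. S \<subseteq> T \<Longrightarrow> P S \<Longrightarrow> P T"
  shows "maximal_sets {T \<in> F. P T} = {T \<in> maximal_sets F. P T}"
  using assms unfolding maximal_sets_def by blast

lemma demand_subset_Pow: "demand v n p \<subseteq> Pow {..<n}"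
  unfolding demand_def by auto

lemma finite_demand: "finite (demand v n p)"
  by (rule finite_subset[OF demand_subset_Pow]) simp

lemma finite_demanded_bundles: "\<forall>A\<in>demand v n p. finite A"
  unfolding demand_def using finite_subset[of _ "{..<n}"] by blast

lemma demand_nonempty: "demand v n p \<noteq> {}"
proof -
  let ?cost = "\<lambda>S. sum p S - v S"
  have "finite (Pow {..<n})" "Pow {..<n} \<noteq> {}" by auto
  from arg_min_if_finite[OF this, of ?cost]
  obtain S where "S \<subseteq> {..<n}" and S_min: "\<And>T. T \<subseteq> {..<n} \<Longrightarrow> ?cost S \<le> ?cost T"
    by (auto simp: not_less)
  then have "S \<in> demand v n p"
    unfolding demand_def by (auto simp: algebra_simps)
  then show ?thesis by blast
qed

lemma lex_first_in_demand_subfamily: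
  assumes "G \<subseteq> demand v n p" "G \<noteq> {}"
  shows "lex_first G \<in> G"
proof (rule lex_first_least(1)[OF _ \<open>G \<noteq> {}\<close>])
  show "finite G" using assms(1) finite_demand by (rule finite_subset)
  show "\<forall>A\<in>G. finite A" using assms(1) finite_demanded_bundles by blast
qed

lemma sum_fun_upd_member:
  fixes p :: "'a \<Rightarrow> 'b::ab_group_add"
  assumes "finite T" "i \<in> T"
  shows "sum (p(i := q)) T = sum p T + (q - p i)"
  using assms by (simp add: sum.remove sum.cong[of _ _ "p(i:=q)" p])

lemma sum_fun_upd_nonmember:
  assumes "i \<notin> T"
  shows "sum (p(i := q)) T = sum p T"
  using assms by (intro sum.cong) auto

lemma maximizers_after_penalty:
  fixes u u' :: "'a \<Rightarrow> real"
  assumes penalty: "\<And>T. T \<in> F \<Longrightarrow> u' T = u T - (if P T then d else 0)"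
    and "d > 0" and "S \<in> F" "P S" and S_max: "\<And>T. T \<in> F \<Longrightarrow> u' T \<le> u' S"
  shows "{A \<in> F. \<forall>T\<in>F. u T \<le> u A} = {A \<in> F. P A \<and> (\<forall>T\<in>F. u' T \<le> u' A)}"
proof -
  have u_S: "u S = u' S + d"
    using penalty[OF \<open>S \<in> F\<close>] \<open>P S\<close> by simp
  have u_le: "u T \<le> u' S + d" and u_lt: "\<not> P T \<Longrightarrow> u T < u' S + d" if "T \<in> F" for T
    using penalty[OF that] S_max[OF that] \<open>d > 0\<close> by (auto split: if_splits)
  have max_u: "(\<forall>T\<in>F. u T \<le> u A) \<longleftrightarrow> u A = u' S + d" if "A \<in> F" for A
    using u_le u_S \<open>S \<in> F\<close> that by fastforce
  have max_u': "(\<forall>T\<in>F. u' T \<le> u' A) \<longleftrightarrow> u' A = u' S" if "A \<in> F" for A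
    using S_max \<open>S \<in> F\<close> that by fastforce
  have "u A = u' S + d \<longleftrightarrow> P A \<and> u' A = u' S" if "A \<in> F" for A
    using u_lt[OF that] penalty[OF that] by auto
  then show ?thesis
    using max_u max_u' by blast
qed

lemma demand_eq_maximizers:
  "demand v n p = {A \<in> Pow {..<n}. \<forall>T\<in>Pow {..<n}. v T - sum p T \<le> v A - sum p A}"
  unfolding demand_def by auto

lemma demand_raise_price:
  assumes "p i < q" "S \<in> demand v n (p(i := q))" "i \<in> S"
  shows "demand v n p = {T \<in> demand v n (p(i := q)). i \<in> T}"
proof -
  have penalty: "v T - sum (p(i := q)) T = (v T - sum p T) - (if i \<in> T then q - p i else 0)"
    if "T \<in> Pow {..<n}" for T
    using that finite_subset[of T "{..<n}"]
      sum_fun_upd_member[of T i p q] sum_fun_upd_nonmember[of i T p q]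
    by (cases "i \<in> T") auto
  have "{A \<in> Pow {..<n}. \<forall>T\<in>Pow {..<n}. v T - sum p T \<le> v A - sum p A}
      = {A \<in> Pow {..<n}. i \<in> A \<and>
          (\<forall>T\<in>Pow {..<n}. v T - sum (p(i := q)) T \<le> v A - sum (p(i := q)) A)}"
    by (rule maximizers_after_penalty[OF penalty]) (use assms in \<open>auto simp: demand_def\<close>)
  then show ?thesis
    unfolding demand_eq_maximizers by (simp only: mem_Collect_eq Collect_conj_eq) blast
qed

lemma up_consistent_lex_first_select:
  fixes sel :: "nat set set \<Rightarrow> nat set set"
  assumes sel_subset: "\<And>F. sel F \<subseteq> F"
    and sel_filter: "\<And>F i. sel {T \<in> F. i \<in> T} = {T \<in> sel F. i \<in> T}"
    and sel_nonempty: "\<And>p. sel (demand v n p) \<noteq> {}"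
  shows "up_consistent n (\<lambda>p. lex_first (sel (demand v n p)))"
  unfolding up_consistent_def
proof (intro allI impI)
  fix p :: "nat \<Rightarrow> real" and i :: nat and q :: real
  assume "p i < q"
  let ?G = "sel (demand v n (p(i := q)))"
  have chosen: "lex_first ?G \<in> ?G"
    by (rule lex_first_in_demand_subfamily[OF sel_subset sel_nonempty])
  show "lex_first ?G = lex_first (sel (demand v n p)) \<or> i \<notin> lex_first ?G"
  proof (cases "i \<in> lex_first ?G")
    case True
    have "lex_first ?G \<in> demand v n (p(i := q))"
      using chosen sel_subset by blast
    from demand_raise_price[OF \<open>p i < q\<close> this True]
    have restrict: "sel (demand v n p) = {T \<in> ?G. i \<in> T}"
      by (simp add: sel_filter)
    have "finite ?G"
      by (rule finite_subset[OF sel_subset finite_demand])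
    moreover have "\<forall>A\<in>?G. finite A"
      using sel_subset finite_demanded_bundles by blast
    ultimately have "lex_first {T \<in> ?G. i \<in> T} = lex_first ?G"
      by (rule lex_first_subfamily[OF _ sel_nonempty]) (use chosen True in auto)
    then show ?thesis
      by (simp add: restrict)
  qed simp
qed

theorem mainTheorem10:
  fixes v :: "nat set \<Rightarrow> real" and n :: nat
  assumes mono: "\<And>A B. A \<subseteq> B \<Longrightarrow> B \<subseteq> {..<n} \<Longrightarrow> v A \<le> v B"
    and nonneg: "\<And>S. S \<subseteq> {..<n} \<Longrightarrow> 0 \<le> v S"
    and empty: "v {} = 0"
  shows "decision_map v n (\<lambda>p. lex_first (demand v n p))
       \<and> up_consistent n (\<lambda>p. lex_first (demand v n p))
       \<and> decision_map v n (\<lambda>p. lex_first (maximal_sets (demand v n p)))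
       \<and> maximal_dm v n (\<lambda>p. lex_first (maximal_sets (demand v n p)))
       \<and> up_consistent n (\<lambda>p. lex_first (maximal_sets (demand v n p)))"
proof (intro conjI)
  have maximal_nonempty: "maximal_sets (demand v n p) \<noteq> {}" for p
    by (rule maximal_sets_nonempty[OF finite_demand demand_nonempty])
  have lex_first_maximal: "lex_first (maximal_sets (demand v n p)) \<in> maximal_sets (demand v n p)" for p
    by (rule lex_first_in_demand_subfamily[OF maximal_sets_subset maximal_nonempty])
  show "decision_map v n (\<lambda>p. lex_first (demand v n p))"
    unfolding decision_map_def
    using lex_first_in_demand_subfamily[OF subset_refl demand_nonempty] by blast
  show "up_consistent n (\<lambda>p. lex_first (demand v n p))"
    using up_consistent_lex_first_select[where sel = "\<lambda>F. F"] demand_nonempty by simp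
  show "decision_map v n (\<lambda>p. lex_first (maximal_sets (demand v n p)))"
    unfolding decision_map_def using lex_first_maximal maximal_sets_subset by blast
  show "maximal_dm v n (\<lambda>p. lex_first (maximal_sets (demand v n p)))"
    unfolding maximal_dm_def using lex_first_maximal unfolding maximal_sets_def by blast
  show "up_consistent n (\<lambda>p. lex_first (maximal_sets (demand v n p)))"
    by (rule up_consistent_lex_first_select[OF maximal_sets_subset _ maximal_nonempty])
      (rule maximal_sets_filter_upward_closed, blast)
qed

end
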